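(* Let $\mathcal X=\{X_1,\dots,X_n\}$, $n\in\mathbb N$, be a multi-set of real symmetric $2\times2$ matrices with $-\frac1{\sqrt2}I\le_{\mathrm L}X_i\le_{\mathrm L}\frac1{\sqrt2}I$ for all $i$. Then $-\frac1{\sqrt2}I\le_{\mathrm L}\mathrm{Sup}_{\mathrm{RLE}}(\mathcal X)\le_{\mathrm L}\frac1{\sqrt2}I$.
   Context: $A\le_{\mathrm L}B$ means $B-A$ is positive semidefinite; $I$ is the $2\times 2$ identity. $\mathrm{Sup}_{\mathrm{LE}}(\mathcal X):=\lim_{m\to\infty}\frac1m\log\sum_{i}\exp(mX_i)$. Write $X_i=\lambda_iu_iu_i^{\mathsf T}+\mu_iv_iv_i^{\mathsf T}$ (spectral form, $\lambda_i\ge\mu_i$, orthonormal $u_i,v_i$). The multi-set of bases $\{\{u_i,v_i\}\}_{i}$ is generic if for no $i\neq j$ the vector $u_i$ is aligned (equal up to sign) with $u_j$. Families $\mathcal X^{(\delta)}=\{X_1^{(\delta)},\dots,X_n^{(\delta)}\}$ converge planar to $\mathcal X$ if $X_i^{(\delta)}\to X_i$ as $\delta\to0$ and $X_i^{(\delta)}$ has the same eigenvalues as $X_i$ for all $i$ and $\delta$. The relaxed log-exp-supremum is $\mathrm{Sup}_{\mathrm{RLE}}(\mathcal X):=\mathrm{Sup}_{\mathrm{LE}}(\mathcal X)$ if the bases of $\mathcal X$ are generic, and otherwise $\mathrm{Sup}_{\mathrm{RLE}}(\mathcal X):=\lim_{\delta\to0}\mathrm{Sup}_{\mathrm{LE}}(\mathcal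 X^{(\delta)})$, where $\mathcal X^{(\delta)}$ converges planar to $\mathcal X$ and each $\mathcal X^{(\delta)}$ has generic bases (the limit being the same for all such families). *)

theory Defs
  imports "HOL-Analysis.Analysis"
begin

type_synonym mat2 = "real^2^2"

definition sym2 :: "mat2 \<Rightarrow> bool" where
  "sym2 A \<longleftrightarrow> transpose A = A"

definition outer2 :: "real^2 \<Rightarrow> real^2 \<Rightarrow> mat2" where
  "outer2 u v = (\<chi> i j. u $ i * v $ j)"

definition psd2 :: "mat2 \<Rightarrow> bool" where
  "psd2 M \<longleftrightarrow> sym2 M \<and> (\<forall>x. 0 \<le> x \<bullet> (M *v x))"

definition loewner_le :: "mat2 \<Rightarrow> mat2 \<Rightarrow> bool" where
  "loewner_le A B \<longleftrightarrow> psd2 (B - A)"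

definition spectral_form :: "mat2 \<Rightarrow> real \<Rightarrow> real \<Rightarrow> real^2 \<Rightarrow> real^2 \<Rightarrow> bool" where
  "spectral_form A l m u v \<longleftrightarrow> l \<ge> m \<and> norm u = 1 \<and> norm v = 1 \<and> u \<bullet> v = 0 \<and>
     A = l *\<^sub>R outer2 u u + m *\<^sub>R outer2 v v"

definition mat_fun :: "(real \<Rightarrow> real) \<Rightarrow> mat2 \<Rightarrow> mat2" where
  "mat_fun f A = (THE B. \<exists>l m u v. spectral_form A l m u v \<and>
        B = f l *\<^sub>R outer2 u u + f m *\<^sub>R outer2 v v)"

definition mat_exp :: "mat2 \<Rightarrow> mat2" where "mat_exp = mat_fun exp"
definition mat_log :: "mat2 \<Rightarrow> mat2" where "mat_log = mat_fun ln"

definition sup_LE :: "nat \<Rightarrow> (nat \<Rightarrow> mat2) \<Rightarrow> mat2" where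
  "sup_LE n X = lim (\<lambda>m::nat. (1 / real m) *\<^sub>R mat_log (\<Sum>i<n. mat_exp (real m *\<^sub>R X i)))"

definition aligned :: "real^2 \<Rightarrow> real^2 \<Rightarrow> bool" where
  "aligned u w \<longleftrightarrow> u = w \<or> u = - w"

definition generic_bases :: "nat \<Rightarrow> (nat \<Rightarrow> mat2) \<Rightarrow> bool" where
  "generic_bases n X \<longleftrightarrow> (\<exists>l m u v. (\<forall>i<n. spectral_form (X i) (l i) (m i) (u i) (v i)) \<and>
      (\<forall>i<n. \<forall>j<n. i \<noteq> j \<longrightarrow> \<not> aligned (u i) (u j)))"

definition same_eigenvalues :: "mat2 \<Rightarrow> mat2 \<Rightarrow> bool" where
  "same_eigenvalues A B \<longleftrightarrow>
     (\<forall>l m. (\<exists>u v. spectral_form A l m u v) \<longleftrightarrow> (\<exists>u v. spectral_form B l m u v))"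

definition converges_planar :: "nat \<Rightarrow> (real \<Rightarrow> nat \<Rightarrow> mat2) \<Rightarrow> (nat \<Rightarrow> mat2) \<Rightarrow> bool" where
  "converges_planar n XD X \<longleftrightarrow>
     (\<forall>i<n. ((\<lambda>d. XD d i) \<longlongrightarrow> X i) (at_right 0)) \<and>
     (\<forall>d>0. \<forall>i<n. same_eigenvalues (XD d i) (X i))"

definition sup_RLE :: "nat \<Rightarrow> (nat \<Rightarrow> mat2) \<Rightarrow> mat2" where
  "sup_RLE n X = (if generic_bases n X then sup_LE n X
     else (THE L. \<forall>XD. converges_planar n XD X \<and> (\<forall>d>0. generic_bases n (XD d)) \<longrightarrow>
                        ((\<lambda>d. sup_LE n (XD d)) \<longlongrightarrow> L) (at_right 0)))"

end

theory Submission
  imports Defs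
begin

text \<open>For generic bases, the sum of the \<open>exp (k X\<^sub>i)\<close> has largest eigenvalue of order
  \<open>exp (k \<Lambda>)\<close>, where \<open>\<Lambda>\<close> is the largest eigenvalue among all \<open>X\<^sub>i\<close>, attained by some
  \<open>X\<^sub>i\<^sub>0\<close>, and smallest eigenvalue of order \<open>exp (k \<nu>)\<close>, where \<open>\<nu>\<close> is the largest of the
  smaller eigenvalue of \<open>X\<^sub>i\<^sub>0\<close> and the larger eigenvalues of the other \<open>X\<^sub>j\<close>; the lower bound
  holds because no leading eigenvector \<open>u\<^sub>j\<close> is aligned with \<open>u\<^sub>i\<^sub>0\<close>. The leading eigenvector
  tends to \<open>u\<^sub>i\<^sub>0\<close> when \<open>\<nu> < \<Lambda>\<close>, so the log-exp-supremum is
  \<open>\<nu> I + (\<Lambda> - \<nu>) u\<^sub>i\<^sub>0 u\<^sub>i\<^sub>0\<^sup>T\<close>, with eigenvalues \<open>\<Lambda>\<close> and \<open>\<nu>\<close>.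
  This matrix depends only on the eigenvalues and continuously on \<open>X\<^sub>i\<^sub>0\<close>, so every planar
  generic perturbation has the same limit, and such perturbations exist (rotate the basis of
  \<open>X\<^sub>j\<close> by the angle \<open>j t\<close>). Hence the relaxed supremum has eigenvalues in the range of those
  of the \<open>X\<^sub>i\<close>; the bound \<open>1/\<surd>2\<close> plays no special role.\<close>

section \<open>Symmetric 2x2 matrices and their spectral forms\<close>

lemma inner_vec2: "(x::real^2) \<bullet> y = x$1 * y$1 + x$2 * y$2"
  by (simp add: inner_vec_def sum_2)

lemma matrix_vector_mult_vec2_nth: "((M::mat2) *v x) $ i = M$i$1 * x$1 + M$i$2 * x$2"
  by (simp add: matrix_vector_mult_def sum_2)

lemma outer2_nth [simp]: "outer2 u v $ i $ j = u$i * v$j"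
  by (simp add: outer2_def)

lemma mat2_eq_iff:
  "(A::mat2) = B \<longleftrightarrow> A$1$1 = B$1$1 \<and> A$1$2 = B$1$2 \<and> A$2$1 = B$2$1 \<and> A$2$2 = B$2$2"
  by (auto simp: vec_eq_iff forall_2)

lemma norm_eq_1_vec2: "norm (u::real^2) = 1 \<longleftrightarrow> (u$1)^2 + (u$2)^2 = 1"
  by (simp add: norm_eq_sqrt_inner inner_vec2 power2_eq_square)

lemma trace_mat2: "trace (A::mat2) = A$1$1 + A$2$2"
  by (simp add: trace_def sum_2)

lemma trace_outer2_unit: "norm (u::real^2) = 1 \<Longrightarrow> trace (outer2 u u) = 1"
  by (simp add: trace_mat2 norm_eq_1_vec2 power2_eq_square)

lemma sym2_iff: "sym2 (A::mat2) \<longleftrightarrow> A$2$1 = A$1$2"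
  by (auto simp: sym2_def mat2_eq_iff transpose_def)

lemma sym2_add: "sym2 A \<Longrightarrow> sym2 B \<Longrightarrow> sym2 (A + B)"
  and sym2_diff: "sym2 A \<Longrightarrow> sym2 B \<Longrightarrow> sym2 (A - B)"
  and sym2_scaleR: "sym2 A \<Longrightarrow> sym2 (c *\<^sub>R A)"
  and sym2_outer2: "sym2 (outer2 u u)"
  and sym2_mat1: "sym2 (mat 1)"
  by (simp_all add: sym2_iff mat_def)

lemma sym2_sum: "(\<And>j. j \<in> J \<Longrightarrow> sym2 (f j)) \<Longrightarrow> sym2 (\<Sum>j\<in>J. f j)"
  by (simp add: sym2_iff sum_component)

lemma trace_sum_mat2: "trace (\<Sum>j\<in>J. f j :: mat2) = (\<Sum>j\<in>J. trace (f j))"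
  by (simp add: trace_mat2 sum_component sum.distrib)

definition quad :: "mat2 \<Rightarrow> real^2 \<Rightarrow> real" where
  "quad M x = x \<bullet> (M *v x)"

lemma quad_add: "quad (A + B) x = quad A x + quad B x"
  and quad_diff: "quad (A - B) x = quad A x - quad B x"
  and quad_scaleR: "quad (c *\<^sub>R A) x = c * quad A x"
  and quad_mat1: "quad (mat 1) x = x \<bullet> x"
  and quad_outer2: "quad (outer2 u u) x = (u \<bullet> x)^2"
  by (simp_all add: quad_def matrix_vector_mult_add_rdistrib matrix_vector_mult_diff_rdistrib
      inner_add_right inner_diff_right inner_vec2 matrix_vector_mult_vec2_nth power2_eq_square
      algebra_simps flip: scaleR_matrix_vector_assoc)

lemma quad_sum: "quad (\<Sum>j\<in>J. f j) x = (\<Sum>j\<in>J. quad (f j) x)"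
  by (induction J rule: infinite_finite_induct)
    (simp_all add: quad_def matrix_vector_mult_add_rdistrib inner_add_right)

lemma psd2_iff_quad: "psd2 M \<longleftrightarrow> sym2 M \<and> (\<forall>x. 0 \<le> quad M x)"
  by (simp add: psd2_def quad_def)

lemma outer2_orthonormal_sum:
  assumes "norm (u::real^2) = 1" "norm v = 1" "u \<bullet> v = 0"
  shows "outer2 u u + outer2 v v = mat 1"
proof -
  have "(u$1)^2 + (u$2)^2 = 1" "(v$1)^2 + (v$2)^2 = 1" "u$1 * v$1 + u$2 * v$2 = 0"
    using assms by (simp_all add: norm_eq_1_vec2 inner_vec2)
  then have "(u$1)^2 + (v$1)^2 = 1" "(u$2)^2 + (v$2)^2 = 1" "u$1 * u$2 + v$1 * v$2 = 0"
    by algebra+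
  then show ?thesis
    by (simp add: mat2_eq_iff mat_def power2_eq_square mult.commute)
qed

lemma scaleR_outer2_orthonormal:
  assumes "norm (u::real^2) = 1" "norm v = 1" "u \<bullet> v = 0"
  shows "a *\<^sub>R outer2 u u + b *\<^sub>R outer2 v v = b *\<^sub>R mat 1 + (a - b) *\<^sub>R outer2 u u"
  using outer2_orthonormal_sum[OF assms] by (simp add: algebra_simps flip: scaleR_right_distrib)

lemma orthonormal_sum_inner_sq:
  assumes "norm (u::real^2) = 1" "norm v = 1" "u \<bullet> v = 0"
  shows "(u \<bullet> x)^2 + (v \<bullet> x)^2 = x \<bullet> x"
  using arg_cong[OF outer2_orthonormal_sum[OF assms], of "\<lambda>M. quad M x"]
  by (simp add: quad_add quad_outer2 quad_mat1)

lemma spectral_form_unit: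
  assumes "spectral_form A l m u v"
  shows "norm u = 1" "norm v = 1" "u \<bullet> v = 0"
  using assms by (simp_all add: spectral_form_def)

lemma spectral_form_shift:
  assumes "spectral_form A l m u v"
  shows "A = m *\<^sub>R mat 1 + (l - m) *\<^sub>R outer2 u u"
  using assms scaleR_outer2_orthonormal[OF spectral_form_unit[OF assms]]
  by (simp add: spectral_form_def)

lemma sym2_spectral_form: "spectral_form A l m u v \<Longrightarrow> sym2 A"
  by (simp add: spectral_form_def sym2_add sym2_scaleR sym2_outer2)

lemma spectral_form_scaleR_mat1:
  "spectral_form (c *\<^sub>R mat 1) c c (vector [1, 0]) (vector [0, 1])"
  by (simp add: spectral_form_def norm_eq_1_vec2 inner_vec2 mat2_eq_iff mat_def)

lemma quad_spectral_form:
  "spectral_form A l m u v \<Longrightarrow> quad A x = l * (u \<bullet> x)^2 + m * (v \<bullet> x)^2"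
  by (simp add: spectral_form_def quad_add quad_scaleR quad_outer2)

lemma quad_spectral_form_bounds:
  assumes sf: "spectral_form A l m u v" and x: "norm x = 1"
  shows "m \<le> quad A x" "quad A x \<le> l"
proof -
  have "(u \<bullet> x)^2 + (v \<bullet> x)^2 = 1"
    using orthonormal_sum_inner_sq[OF spectral_form_unit[OF sf]] x by (simp add: dot_square_norm)
  then have "m = m * (u \<bullet> x)^2 + m * (v \<bullet> x)^2" "l = l * (u \<bullet> x)^2 + l * (v \<bullet> x)^2"
    by (metis distrib_left mult_1_right)+
  moreover have "m \<le> l" using sf by (simp add: spectral_form_def)
  then have "m * (u \<bullet> x)^2 \<le> l * (u \<bullet> x)^2" "m * (v \<bullet> x)^2 \<le> l * (v \<bullet> x)^2"
    by (simp_all add: mult_right_mono)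
  ultimately show "m \<le> quad A x" "quad A x \<le> l"
    unfolding quad_spectral_form[OF sf] by linarith+
qed

lemma quad_spectral_form_eigvec:
  assumes "spectral_form A l m u v"
  shows "quad A u = l" "quad A v = m"
  using quad_spectral_form[OF assms] spectral_form_unit[OF assms]
  by (simp_all add: inner_commute dot_square_norm)

lemma spectral_form_eigenvalues_unique:
  assumes sf: "spectral_form A l m u v" and sf': "spectral_form A l' m' u' v'"
  shows "l = l'" "m = m'"
proof -
  have "l \<le> l'" "m' \<le> m"
    using quad_spectral_form_bounds[OF sf' spectral_form_unit(1)[OF sf]]
      quad_spectral_form_bounds[OF sf' spectral_form_unit(2)[OF sf]]
      quad_spectral_form_eigvec[OF sf] by simp_all
  moreover have "l' \<le> l" "m \<le> m'"
    using quad_spectral_form_bounds[OF sf spectral_form_unit(1)[OF sf']]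
      quad_spectral_form_bounds[OF sf spectral_form_unit(2)[OF sf']]
      quad_spectral_form_eigvec[OF sf'] by simp_all
  ultimately show "l = l'" "m = m'" by simp_all
qed

lemma trace_spectral_form:
  assumes "spectral_form A l m u v"
  shows "trace A = l + m"
proof -
  have "trace A = l * trace (outer2 u u) + m * trace (outer2 v v)"
    using assms by (simp add: spectral_form_def trace_mat2 algebra_simps)
  then show ?thesis using trace_outer2_unit spectral_form_unit[OF assms] by simp
qed

lemma same_eigenvalues_if_spectral_forms:
  assumes "spectral_form A l m u v" "spectral_form B l m u' v'"
  shows "same_eigenvalues A B"
  using assms spectral_form_eigenvalues_unique unfolding same_eigenvalues_def by metis

lemma mat_fun_spectral_form:
  assumes sf: "spectral_form A l m u v"
  shows "mat_fun f A = f l *\<^sub>R outer2 u u + f m *\<^sub>R outer2 v v"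
  unfolding mat_fun_def
proof (rule the_equality)
  fix B
  assume "\<exists>l' m' u' v'. spectral_form A l' m' u' v' \<and>
    B = f l' *\<^sub>R outer2 u' u' + f m' *\<^sub>R outer2 v' v'"
  then obtain l' m' u' v' where sf': "spectral_form A l' m' u' v'"
    and B: "B = f l' *\<^sub>R outer2 u' u' + f m' *\<^sub>R outer2 v' v'"
    by blast
  have [simp]: "l' = l" "m' = m" using spectral_form_eigenvalues_unique[OF sf sf'] by simp_all
  \<comment> \<open>If \<open>l \<noteq> m\<close>, the eigenprojection \<open>u u\<^sup>T = (A - m I) / (l - m)\<close> is determined by \<open>A\<close>.\<close>
  have "l \<noteq> m \<Longrightarrow> outer2 u' u' = outer2 u u"
    using spectral_form_shift[OF sf] spectral_form_shift[OF sf'] by simp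
  then show "B = f l *\<^sub>R outer2 u u + f m *\<^sub>R outer2 v v"
    unfolding B scaleR_outer2_orthonormal[OF spectral_form_unit[OF sf]]
      scaleR_outer2_orthonormal[OF spectral_form_unit[OF sf']]
    by (cases "l = m") simp_all
qed (use sf in blast)

lemma mat_fun_spectral_form_shift:
  "spectral_form A l m u v \<Longrightarrow> mat_fun f A = f m *\<^sub>R mat 1 + (f l - f m) *\<^sub>R outer2 u u"
  using mat_fun_spectral_form scaleR_outer2_orthonormal spectral_form_unit by metis

lemma mat_exp_scaleR_spectral_form:
  assumes "spectral_form A l m u v" "0 \<le> c"
  shows "mat_exp (c *\<^sub>R A) = exp (c * l) *\<^sub>R outer2 u u + exp (c * m) *\<^sub>R outer2 v v"
proof -
  have "spectral_form (c *\<^sub>R A) (c * l) (c * m) u v"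
    using assms by (auto simp: spectral_form_def mult_left_mono algebra_simps)
  then show ?thesis unfolding mat_exp_def by (rule mat_fun_spectral_form)
qed

lemma spectral_form_exists:
  assumes "sym2 A"
  shows "\<exists>l m u v. spectral_form A l m u v"
proof -
  define p q r where "p = A$1$1" and "q = A$1$2" and "r = A$2$2"
  define D where "D = sqrt ((p - r)^2 + (2 * q)^2)"
  have D2: "D^2 = (p - r)^2 + (2 * q)^2" and D0: "0 \<le> D" unfolding D_def by simp_all
  obtain C S where CS: "C^2 + S^2 = 1" "D * C = p - r" "D * S = 2 * q"
  proof (cases "D = 0")
    case True
    then show ?thesis using D2 sum_power2_eq_zero_iff[of "p - r" "2 * q"] that[of 1 0] by simp
  next
    case False
    have "((p - r) / D)^2 + (2 * q / D)^2 = ((p - r)^2 + (2 * q)^2) / D^2"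
      by (simp add: power_divide add_divide_distrib)
    also have "\<dots> = 1" using False by (simp only: D2[symmetric]) simp
    finally have "((p - r) / D)^2 + (2 * q / D)^2 = 1" .
    then show ?thesis using False that[of "(p - r) / D" "2 * q / D"] by simp
  qed
  \<comment> \<open>The eigenbasis is the standard basis rotated by half the angle of \<open>(p - r, 2 q)\<close>.\<close>
  obtain t where t: "C = cos (2 * t)" "S = sin (2 * t)"
    using sincos_total_2pi_le[OF CS(1)] by (metis mult_2 field_sum_of_halves)
  have "D * ((cos t)^2 - (sin t)^2) = p - r" "D * (2 * sin t * cos t) = 2 * q"
    using CS t by (simp_all add: cos_double sin_double)
  then have "spectral_form A ((p + r + D) / 2) ((p + r - D) / 2)
    (vector [cos t, sin t]) (vector [- sin t, cos t])"
    using D0 assms unfolding spectral_form_def norm_eq_1_vec2 inner_vec2 mat2_eq_iff sym2_iff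
    by (simp add: p_def q_def r_def) (use sin_cos_squared_add[of t] in \<open>intro conjI; algebra\<close>)
  then show ?thesis by blast
qed

lemma spectral_forms_exist:
  assumes "\<And>j. j < n \<Longrightarrow> sym2 (X j)"
  obtains l m u v where "\<And>j. j < n \<Longrightarrow> spectral_form (X j) (l j) (m j) (u j) (v j)"
proof -
  have "\<forall>j. \<exists>l m u v. j < n \<longrightarrow> spectral_form (X j) l m u v"
    using spectral_form_exists assms by blast
  then show ?thesis using that by metis
qed

lemma nonneg_weighted_inner_sq_iff:
  assumes "norm (u::real^2) = 1" "norm v = 1" "u \<bullet> v = 0"
  shows "(\<forall>x. 0 \<le> a * (u \<bullet> x)^2 + b * (v \<bullet> x)^2) \<longleftrightarrow> 0 \<le> a \<and> 0 \<le> b"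
proof
  assume "\<forall>x. 0 \<le> a * (u \<bullet> x)^2 + b * (v \<bullet> x)^2"
  from this[rule_format, of u] this[rule_format, of v] show "0 \<le> a \<and> 0 \<le> b"
    using assms by (simp add: inner_commute dot_square_norm)
qed simp

lemma spectral_form_loewner_bounds_iff:
  assumes sf: "spectral_form A l m u v"
  shows "loewner_le ((- c) *\<^sub>R mat 1) A \<and> loewner_le A (c *\<^sub>R mat 1) \<longleftrightarrow> - c \<le> m \<and> l \<le> c"
proof -
  have sum_sq: "x \<bullet> x = (u \<bullet> x)^2 + (v \<bullet> x)^2" for x
    using orthonormal_sum_inner_sq[OF spectral_form_unit[OF sf]] by simp
  have lower: "quad (A - (- c) *\<^sub>R mat 1) x = (l + c) * (u \<bullet> x)^2 + (m + c) * (v \<bullet> x)^2"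
    and upper: "quad (c *\<^sub>R mat 1 - A) x = (c - l) * (u \<bullet> x)^2 + (c - m) * (v \<bullet> x)^2" for x
    using quad_spectral_form[OF sf, of x] sum_sq[of x]
    by (simp_all add: quad_add quad_diff quad_scaleR quad_mat1 algebra_simps)
  have "sym2 (A - (- c) *\<^sub>R mat 1)" "sym2 (c *\<^sub>R mat 1 - A)"
    using sym2_spectral_form[OF sf] by (simp_all add: sym2_add sym2_diff sym2_scaleR sym2_mat1)
  moreover have "m \<le> l" using sf by (simp add: spectral_form_def)
  ultimately show ?thesis
    unfolding loewner_le_def psd2_iff_quad lower upper nonneg_weighted_inner_sq_iff[OF spectral_form_unit[OF sf]]
    by auto
qed


section \<open>Asymptotic lemmas\<close>

lemma tendsto_exp_mult_neg: "a < 0 \<Longrightarrow> (\<lambda>k::nat. exp (real k * a)) \<longlonglongrightarrow> 0"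
  by (simp add: exp_of_nat_mult LIMSEQ_power_zero)

lemma tendsto_ln_div_of_exp_bounds:
  fixes s :: "nat \<Rightarrow> real"
  assumes c: "0 < c" "0 < C"
    and s: "\<And>k. c * exp (real k * L) \<le> s k" "\<And>k. s k \<le> C * exp (real k * L)"
  shows "(\<lambda>k. ln (s k) / real k) \<longlonglongrightarrow> L"
proof (rule tendsto_sandwich)
  have ln_s: "ln c + real k * L \<le> ln (s k)" "ln (s k) \<le> ln C + real k * L" for k
  proof -
    have pos: "0 < c * exp (real k * L)" "0 < C * exp (real k * L)" using c by simp_all
    then have "0 < s k" using s(1)[of k] by linarith
    then have "ln (c * exp (real k * L)) \<le> ln (s k)" "ln (s k) \<le> ln (C * exp (real k * L))"
      using pos s[of k] by (simp_all only: ln_le_cancel_iff)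
    then show "ln c + real k * L \<le> ln (s k)" "ln (s k) \<le> ln C + real k * L"
      using c by (simp_all add: ln_mult)
  qed
  have shift: "L + a / real k = (a + real k * L) / real k" if "0 < k" for a k
    using that by (simp add: field_simps)
  show "\<forall>\<^sub>F k in sequentially. L + ln c / real k \<le> ln (s k) / real k"
    using eventually_gt_at_top[of 0]
    by eventually_elim (use divide_right_mono[OF ln_s(1)] in \<open>simp add: shift\<close>)
  show "\<forall>\<^sub>F k in sequentially. ln (s k) / real k \<le> L + ln C / real k"
    using eventually_gt_at_top[of 0]
    by eventually_elim (use divide_right_mono[OF ln_s(2)] in \<open>simp add: shift\<close>)
qed (auto intro!: tendsto_eq_intros)

lemma tendsto_outer2:
  "(f \<longlongrightarrow> a) F \<Longrightarrow> ((\<lambda>z. outer2 (f z) (f z)) \<longlongrightarrow> outer2 a a) F"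
  by (intro vec_tendstoI) (simp add: tendsto_mult tendsto_vec_nth)

lemma tendsto_zero_scaleR_outer2:
  assumes a: "(a \<longlongrightarrow> 0) F" and w: "\<And>z. norm (w z :: real^2) = 1"
  shows "((\<lambda>z. a z *\<^sub>R outer2 (w z) (w z)) \<longlongrightarrow> 0) F"
proof (intro vec_tendstoI)
  fix i j :: 2
  have "norm (a z * (w z $ i * w z $ j)) \<le> \<bar>a z\<bar>" for z
    using component_le_norm_cart[of "w z" i] component_le_norm_cart[of "w z" j] w[of z]
    by (simp add: abs_mult mult_le_one mult_left_le)
  then have "((\<lambda>z. a z * (w z $ i * w z $ j)) \<longlongrightarrow> 0) F"
    by (intro Lim_null_comparison[OF always_eventually tendsto_rabs_zero[OF a]]) auto
  then show "((\<lambda>z. (a z *\<^sub>R outer2 (w z) (w z)) $ i $ j) \<longlongrightarrow> (0::mat2) $ i $ j) F"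
    by simp
qed

lemma tendsto_scaled_mat_log:
  fixes S :: "nat \<Rightarrow> mat2"
  assumes sf: "\<And>k. spectral_form (S k) (a k) (b k) (w k) (w' k)"
    and a: "(\<lambda>k. ln (a k) / real k) \<longlonglongrightarrow> \<Lambda>" and b: "(\<lambda>k. ln (b k) / real k) \<longlonglongrightarrow> \<nu>"
    and w: "\<nu> \<noteq> \<Lambda> \<Longrightarrow> (\<lambda>k. outer2 (w k) (w k)) \<longlonglongrightarrow> P"
  shows "(\<lambda>k. (1 / real k) *\<^sub>R mat_log (S k)) \<longlonglongrightarrow> \<nu> *\<^sub>R mat 1 + (\<Lambda> - \<nu>) *\<^sub>R P"
proof -
  have eq: "(1 / real k) *\<^sub>R mat_log (S k) =
    (ln (b k) / real k) *\<^sub>R mat 1 + (ln (a k) / real k - ln (b k) / real k) *\<^sub>R outer2 (w k) (w k)" for k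
    unfolding mat_log_def mat_fun_spectral_form_shift[OF sf]
    by (simp add: scaleR_add_right diff_divide_distrib)
  have "(\<lambda>k. (ln (a k) / real k - ln (b k) / real k) *\<^sub>R outer2 (w k) (w k)) \<longlonglongrightarrow> (\<Lambda> - \<nu>) *\<^sub>R P"
  proof (cases "\<nu> = \<Lambda>")
    case True
    then show ?thesis
      using tendsto_zero_scaleR_outer2[OF _ spectral_form_unit(1)[OF sf]] tendsto_diff[OF a b] by simp
  next
    case False
    then show ?thesis by (intro tendsto_scaleR tendsto_diff a b w)
  qed
  then show ?thesis unfolding eq by (rule tendsto_add[OF tendsto_scaleR[OF b tendsto_const]])
qed

lemma top_eigvec_tendsto:
  fixes S :: "nat \<Rightarrow> mat2"
  assumes sf: "\<And>k. spectral_form (S k) (a k) (b k) (w k) (w' k)"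
    and S: "(\<lambda>k. e k *\<^sub>R S k) \<longlonglongrightarrow> outer2 p p" and p: "norm p = 1"
    and b: "(\<lambda>k. e k * b k) \<longlonglongrightarrow> 0"
  shows "(\<lambda>k. outer2 (w k) (w k)) \<longlonglongrightarrow> outer2 p p"
proof -
  have "(\<lambda>k. trace (e k *\<^sub>R S k)) \<longlonglongrightarrow> trace (outer2 p p)"
    unfolding trace_mat2 by (intro tendsto_add tendsto_vec_nth S)
  moreover have "trace (e k *\<^sub>R S k) = e k * a k + e k * b k" for k
    using trace_spectral_form[OF sf, of k] by (simp add: trace_mat2 flip: distrib_left)
  ultimately have sum: "(\<lambda>k. e k * a k + e k * b k) \<longlonglongrightarrow> 1"
    using trace_outer2_unit[OF p] by simp
  have "(\<lambda>k. (e k * a k + e k * b k) - 2 * (e k * b k)) \<longlonglongrightarrow> 1 - 2 * 0"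
    by (intro tendsto_diff tendsto_mult tendsto_const sum b)
  then have gap: "(\<lambda>k. e k * a k - e k * b k) \<longlonglongrightarrow> 1"
    by (simp add: algebra_simps)
  \<comment> \<open>Since \<open>S = b I + (a - b) w w\<^sup>T\<close>, the projection \<open>w w\<^sup>T\<close> is recovered from \<open>e S\<close> and \<open>e b\<close>.\<close>
  have "(\<lambda>k. (1 / (e k * a k - e k * b k)) *\<^sub>R (e k *\<^sub>R S k - (e k * b k) *\<^sub>R mat 1))
    \<longlonglongrightarrow> (1 / 1) *\<^sub>R (outer2 p p - 0 *\<^sub>R mat 1)"
    by (intro tendsto_scaleR tendsto_divide tendsto_diff tendsto_const gap S b) simp
  moreover have "\<forall>\<^sub>F k in sequentially.
    (1 / (e k * a k - e k * b k)) *\<^sub>R (e k *\<^sub>R S k - (e k * b k) *\<^sub>R mat 1) = outer2 (w k) (w k)"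
    using order_tendstoD(1)[OF gap zero_less_one]
  proof eventually_elim
    case (elim k)
    have "e k *\<^sub>R S k - (e k * b k) *\<^sub>R mat 1 = (e k * a k - e k * b k) *\<^sub>R outer2 (w k) (w k)"
      by (subst spectral_form_shift[OF sf]) (simp add: algebra_simps)
    moreover have "e k \<noteq> 0" "a k \<noteq> b k" using elim by auto
    ultimately show ?case by simp
  qed
  ultimately show ?thesis by (simp add: tendsto_cong)
qed

section \<open>Cross products and rotations in the plane\<close>

definition cross2 :: "real^2 \<Rightarrow> real^2 \<Rightarrow> real" where
  "cross2 x y = x$1 * y$2 - x$2 * y$1"

lemma cross2_sq_add_inner_sq:
  assumes "norm x = 1" "norm y = 1"
  shows "(cross2 x y)^2 + (x \<bullet> y)^2 = 1"
proof -
  have "(cross2 x y)^2 + (x \<bullet> y)^2 = ((x$1)^2 + (x$2)^2) * ((y$1)^2 + (y$2)^2)"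
    unfolding cross2_def inner_vec2 by algebra
  then show ?thesis using assms by (simp add: norm_eq_1_vec2)
qed

lemma aligned_iff_cross2_eq_0:
  assumes u: "norm u = 1" and w: "norm w = 1"
  shows "aligned u w \<longleftrightarrow> cross2 u w = 0"
proof
  assume "cross2 u w = 0"
  then have t: "(u \<bullet> w)^2 = 1" using cross2_sq_add_inner_sq[OF u w] by simp
  have "u \<bullet> u = 1" "w \<bullet> w = 1" using u w by (simp_all add: dot_square_norm)
  then have "(u - (u \<bullet> w) *\<^sub>R w) \<bullet> (u - (u \<bullet> w) *\<^sub>R w) = 1 - (u \<bullet> w)^2"
    by (simp add: inner_diff_left inner_diff_right inner_commute power2_eq_square)
  then have "u = (u \<bullet> w) *\<^sub>R w" using t by simp
  moreover have "u \<bullet> w = 1 \<or> u \<bullet> w = -1" using t by (simp add: power2_eq_1_iff)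
  ultimately show "aligned u w" unfolding aligned_def by auto
qed (auto simp: aligned_def cross2_def)

text \<open>For unit \<open>x\<close>, \<open>cross2 u w = (u \<bullet> x) cross2 x w - (w \<bullet> x) cross2 x u\<close>, and both cross
  products on the right are bounded by 1.\<close>

lemma cross2_sq_le_inner_sq_sum:
  assumes u: "norm u = 1" and w: "norm w = 1" and x: "norm x = 1"
  shows "(cross2 u w)^2 / 2 \<le> (u \<bullet> x)^2 + (w \<bullet> x)^2"
proof -
  define a c p q where "a = u \<bullet> x" and "c = w \<bullet> x" and "p = cross2 x w" and "q = cross2 x u"
  have "p^2 \<le> 1" "q^2 \<le> 1"
    using cross2_sq_add_inner_sq[OF x w] cross2_sq_add_inner_sq[OF x u] zero_le_power2
    unfolding p_def q_def by (metis le_add_same_cancel1)+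
  have "(x$1)^2 + (x$2)^2 = 1" using x by (simp add: norm_eq_1_vec2)
  then have "cross2 u w = a * p - c * q"
    unfolding a_def c_def p_def q_def cross2_def inner_vec2 by algebra
  then have "(cross2 u w)^2 \<le> (a * p - c * q)^2 + (a * p + c * q)^2" by simp
  also have "\<dots> = 2 * (a^2 * p^2 + c^2 * q^2)" by algebra
  also have "\<dots> \<le> 2 * (a^2 + c^2)"
    using mult_left_le[OF \<open>p^2 \<le> 1\<close>, of "a^2"] mult_left_le[OF \<open>q^2 \<le> 1\<close>, of "c^2"] by simp
  finally show ?thesis unfolding a_def c_def by simp
qed

definition rot :: "real \<Rightarrow> real^2 \<Rightarrow> real^2" where
  "rot t x = (\<chi> i. if i = 1 then cos t * x$1 - sin t * x$2 else sin t * x$1 + cos t * x$2)"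

lemma rot_nth [simp]:
  "rot t x $ 1 = cos t * x$1 - sin t * x$2"
  "rot t x $ 2 = sin t * x$1 + cos t * x$2"
  by (simp_all add: rot_def)

lemma inner_rot [simp]: "rot t x \<bullet> rot t y = x \<bullet> y"
proof -
  have "rot t x \<bullet> rot t y = ((sin t)^2 + (cos t)^2) * (x$1 * y$1 + x$2 * y$2)"
    unfolding inner_vec2 rot_nth by algebra
  then show ?thesis by (simp add: inner_vec2)
qed

lemma norm_rot [simp]: "norm (rot t x) = norm x"
  by (simp add: norm_eq_sqrt_inner)

lemma cross2_rot: "cross2 (rot a x) (rot b y) = cos (b - a) * cross2 x y + sin (b - a) * (x \<bullet> y)"
  unfolding cross2_def rot_nth inner_vec2 cos_diff sin_diff by algebra

lemma tendsto_rot: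
  assumes "(f \<longlongrightarrow> 0) F"
  shows "((\<lambda>z. rot (f z) x) \<longlongrightarrow> x) F"
proof (rule vec_tendstoI)
  fix i :: 2
  have cos: "((\<lambda>z. cos (f z)) \<longlongrightarrow> cos 0) F" and sin: "((\<lambda>z. sin (f z)) \<longlongrightarrow> sin 0) F"
    by (rule isCont_tendsto_compose[OF isCont_cos assms] isCont_tendsto_compose[OF isCont_sin assms])+
  have "((\<lambda>z. cos (f z) * x$1 - sin (f z) * x$2) \<longlongrightarrow> cos 0 * x$1 - sin 0 * x$2) F"
    "((\<lambda>z. sin (f z) * x$1 + cos (f z) * x$2) \<longlongrightarrow> sin 0 * x$1 + cos 0 * x$2) F"
    by (intro tendsto_diff tendsto_add tendsto_mult tendsto_const cos sin)+
  then have "((\<lambda>z. rot (f z) x $ 1) \<longlongrightarrow> x $ 1) F" "((\<lambda>z. rot (f z) x $ 2) \<longlongrightarrow> x $ 2) F"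
    by simp_all
  then show "((\<lambda>z. rot (f z) x $ i) \<longlongrightarrow> x $ i) F" using exhaust_2[of i] by auto
qed

lemma eventually_cross2_rot_ne_0:
  fixes x y :: "real^2"
  assumes x: "norm x = 1" and y: "norm y = 1" and ab: "a \<noteq> b"
  shows "\<forall>\<^sub>F t in at_right 0. cross2 (rot (a * t) x) (rot (b * t) y) \<noteq> 0"
proof -
  have eq: "cross2 (rot (a * t) x) (rot (b * t) y) =
      cos ((b - a) * t) * cross2 x y + sin ((b - a) * t) * (x \<bullet> y)" for t
    by (simp add: cross2_rot left_diff_distrib)
  show ?thesis
  proof (cases "cross2 x y = 0")
    case False
    have "((\<lambda>t. cos ((b - a) * t) * cross2 x y + sin ((b - a) * t) * (x \<bullet> y)) \<longlongrightarrow> cross2 x y)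
        (at_right 0)"
      by (auto intro!: tendsto_eq_intros)
    from tendsto_imp_eventually_ne[OF this False] show ?thesis unfolding eq .
  next
    case True
    then have xy: "x \<bullet> y \<noteq> 0" using cross2_sq_add_inner_sq[OF x y] by auto
    have "\<forall>\<^sub>F t in at_right 0. 0 < t \<and> t < pi / \<bar>b - a\<bar>"
      unfolding eventually_at_right_field using ab by (intro exI[of _ "pi / \<bar>b - a\<bar>"]) auto
    then show ?thesis
    proof eventually_elim
      case (elim t)
      then have "\<bar>(b - a) * t\<bar> < pi" "(b - a) * t \<noteq> 0"
        using ab by (simp_all add: abs_mult pos_less_divide_eq mult.commute)
      then have "sin ((b - a) * t) \<noteq> 0" using sin_eq_0_pi[of "(b - a) * t"] by (auto simp: abs_less_iff)
      then show ?case unfolding eq True using xy by simp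
    qed
  qed
qed

section \<open>The log-exp-supremum of a generic family\<close>

definition top_eig :: "(nat \<Rightarrow> real) \<Rightarrow> nat \<Rightarrow> real" where
  "top_eig l n = Max (l ` {..<n})"

definition top_index :: "(nat \<Rightarrow> real) \<Rightarrow> nat \<Rightarrow> nat" where
  "top_index l n = (LEAST j. j < n \<and> l j = top_eig l n)"

definition second_eig :: "(nat \<Rightarrow> real) \<Rightarrow> (nat \<Rightarrow> real) \<Rightarrow> nat \<Rightarrow> real" where
  "second_eig l m n = Max (insert (m (top_index l n)) (l ` ({..<n} - {top_index l n})))"

text \<open>The value \<open>\<nu> I + (\<Lambda> - \<nu>) u\<^sub>i u\<^sub>i\<^sup>T\<close> of the supremum (see \<open>log_exp_limit_eq\<close>), written
  through \<open>Y\<^sub>i\<close> so that it is continuous in \<open>Y\<close> and independent of the choice of eigenvectors;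
  if \<open>Y\<^sub>i\<close> is scalar, then \<open>\<nu> = \<Lambda>\<close> and the division by zero is harmless.\<close>

definition log_exp_limit :: "(nat \<Rightarrow> real) \<Rightarrow> (nat \<Rightarrow> real) \<Rightarrow> nat \<Rightarrow> (nat \<Rightarrow> mat2) \<Rightarrow> mat2" where
  "log_exp_limit l m n Y = (let i = top_index l n; \<nu> = second_eig l m n in
     \<nu> *\<^sub>R mat 1 + ((top_eig l n - \<nu>) / (l i - m i)) *\<^sub>R (Y i - m i *\<^sub>R mat 1))"

lemma top_eig_props:
  assumes "0 < n"
  shows top_index_less: "top_index l n < n"
    and top_eig_attained: "l (top_index l n) = top_eig l n"
    and le_top_eig: "j < n \<Longrightarrow> l j \<le> top_eig l n"
proof -
  have "top_eig l n \<in> l ` {..<n}" unfolding top_eig_def using assms by (intro Max_in) auto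
  then obtain i where "i < n" "l i = top_eig l n" by auto
  then have "top_index l n < n \<and> l (top_index l n) = top_eig l n"
    unfolding top_index_def by (rule LeastI[of _ i, OF conjI])
  then show "top_index l n < n" "l (top_index l n) = top_eig l n" by simp_all
  show "j < n \<Longrightarrow> l j \<le> top_eig l n" unfolding top_eig_def by (intro Max_ge) auto
qed

lemma second_eig_props:
  assumes "0 < n" and ml: "\<And>j. j < n \<Longrightarrow> m j \<le> l j"
  shows le_second_eig_top: "m (top_index l n) \<le> second_eig l m n"
    and le_second_eig_other: "j < n \<Longrightarrow> j \<noteq> top_index l n \<Longrightarrow> l j \<le> second_eig l m n"
    and second_eig_le_top: "second_eig l m n \<le> top_eig l n"
    and second_eig_attained:
      "second_eig l m n = m (top_index l n) \<or> (\<exists>j<n. j \<noteq> top_index l n \<and> l j = second_eig l m n)"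
proof -
  let ?A = "insert (m (top_index l n)) (l ` ({..<n} - {top_index l n}))"
  show "m (top_index l n) \<le> second_eig l m n"
    and "j < n \<Longrightarrow> j \<noteq> top_index l n \<Longrightarrow> l j \<le> second_eig l m n"
    unfolding second_eig_def by (auto intro: Max_ge)
  have "second_eig l m n \<in> ?A" unfolding second_eig_def by (rule Max_in) simp_all
  then show "second_eig l m n = m (top_index l n) \<or> (\<exists>j<n. j \<noteq> top_index l n \<and> l j = second_eig l m n)"
    by auto
  then show "second_eig l m n \<le> top_eig l n"
    using top_eig_props[OF assms(1), where l = l] ml by (metis order_trans)
qed

lemma log_exp_limit_eq:
  assumes n: "0 < n" and sf: "\<And>j. j < n \<Longrightarrow> spectral_form (Y j) (l j) (m j) (u j) (v j)"
  shows "log_exp_limit l m n Y = second_eig l m n *\<^sub>R mat 1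
    + (top_eig l n - second_eig l m n) *\<^sub>R outer2 (u (top_index l n)) (u (top_index l n))"
proof -
  define i where "i = top_index l n"
  have sfi: "spectral_form (Y i) (l i) (m i) (u i) (v i)"
    using sf top_index_less[where l = l, OF n] unfolding i_def by blast
  have ml: "\<And>j. j < n \<Longrightarrow> m j \<le> l j" using sf by (simp add: spectral_form_def)
  have "l i = m i \<Longrightarrow> second_eig l m n = top_eig l n"
    using le_second_eig_top[where l = l and m = m, OF n ml] second_eig_le_top[where l = l and m = m, OF n ml]
      top_eig_attained[where l = l, OF n]
    unfolding i_def by linarith
  then show ?thesis
    unfolding log_exp_limit_def Let_def i_def[symmetric]
    by (cases "l i = m i") (auto simp: spectral_form_shift[OF sfi])
qed

lemma spectral_form_log_exp_limit:
  assumes n: "0 < n" and sf: "\<And>j. j < n \<Longrightarrow> spectral_form (Y j) (l j) (m j) (u j) (v j)"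
  shows "spectral_form (log_exp_limit l m n Y) (top_eig l n) (second_eig l m n)
    (u (top_index l n)) (v (top_index l n))"
proof -
  define i where "i = top_index l n"
  have ml: "\<And>j. j < n \<Longrightarrow> m j \<le> l j" using sf by (simp add: spectral_form_def)
  have unit: "norm (u i) = 1" "norm (v i) = 1" "u i \<bullet> v i = 0"
    using spectral_form_unit[OF sf[OF top_index_less[where l = l, OF n]]] unfolding i_def by simp_all
  have "log_exp_limit l m n Y = second_eig l m n *\<^sub>R mat 1 + (top_eig l n - second_eig l m n) *\<^sub>R outer2 (u i) (u i)"
    unfolding i_def using n sf by (rule log_exp_limit_eq)
  then have "log_exp_limit l m n Y = top_eig l n *\<^sub>R outer2 (u i) (u i) + second_eig l m n *\<^sub>R outer2 (v i) (v i)"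
    unfolding scaleR_outer2_orthonormal[OF unit] .
  then show ?thesis
    using unit second_eig_le_top[where l = l and m = m, OF n ml]
    unfolding spectral_form_def i_def by simp
qed

lemma log_exp_limit_loewner_bounds:
  assumes n: "0 < n" and sf: "\<And>j. j < n \<Longrightarrow> spectral_form (Y j) (l j) (m j) (u j) (v j)"
    and bounds: "\<And>j. j < n \<Longrightarrow> - c \<le> m j \<and> l j \<le> c"
  shows "loewner_le ((- c) *\<^sub>R mat 1) (log_exp_limit l m n Y) \<and> loewner_le (log_exp_limit l m n Y) (c *\<^sub>R mat 1)"
proof -
  have ml: "\<And>j. j < n \<Longrightarrow> m j \<le> l j" using sf by (simp add: spectral_form_def)
  have "- c \<le> second_eig l m n" "top_eig l n \<le> c"
    using le_second_eig_top[where l = l and m = m, OF n ml] top_eig_attained[where l = l, OF n]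
      top_index_less[where l = l, OF n] bounds by force+
  moreover have "spectral_form (log_exp_limit l m n Y) (top_eig l n) (second_eig l m n)
      (u (top_index l n)) (v (top_index l n))"
    using n sf by (rule spectral_form_log_exp_limit)
  ultimately show ?thesis using spectral_form_loewner_bounds_iff by simp
qed

lemma log_exp_limit_cong:
  assumes "0 < n" and "\<And>j. j < n \<Longrightarrow> l' j = l j \<and> m' j = m j"
  shows "log_exp_limit l' m' n Y = log_exp_limit l m n Y"
proof -
  have top: "top_eig l' n = top_eig l n"
    unfolding top_eig_def using assms(2) by (intro arg_cong[where f = Max] image_cong) auto
  then have index: "top_index l' n = top_index l n"
    unfolding top_index_def using assms(2) by metis
  have second: "second_eig l' m' n = second_eig l m n"
    using assms top_index_less[OF assms(1), of l] unfolding second_eig_def index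
    by (intro arg_cong[where f = Max] arg_cong2[where f = insert] image_cong) auto
  show ?thesis
    using assms top_index_less[OF assms(1), of l]
    unfolding log_exp_limit_def Let_def top index second by simp
qed

locale generic_family =
  fixes n :: nat and Y :: "nat \<Rightarrow> mat2" and l m :: "nat \<Rightarrow> real" and u v :: "nat \<Rightarrow> real^2"
  assumes n_pos: "0 < n"
    and spectral: "\<And>j. j < n \<Longrightarrow> spectral_form (Y j) (l j) (m j) (u j) (v j)"
    and not_aligned: "\<And>i j. i < n \<Longrightarrow> j < n \<Longrightarrow> i \<noteq> j \<Longrightarrow> \<not> aligned (u i) (u j)"
begin

abbreviation "i\<^sub>0 \<equiv> top_index l n"
abbreviation "\<Lambda> \<equiv> top_eig l n"
abbreviation "\<nu> \<equiv> second_eig l m n"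

lemma m_le_l: "j < n \<Longrightarrow> m j \<le> l j"
  using spectral by (simp add: spectral_form_def)

lemma norm_eigvecs: "j < n \<Longrightarrow> norm (u j) = 1" "j < n \<Longrightarrow> norm (v j) = 1"
  using spectral spectral_form_unit by blast+

lemma i\<^sub>0_less: "i\<^sub>0 < n"
  using n_pos by (rule top_index_less)

lemma l_i\<^sub>0: "l i\<^sub>0 = \<Lambda>"
  using n_pos by (rule top_eig_attained)

lemma l_le_\<Lambda>: "j < n \<Longrightarrow> l j \<le> \<Lambda>"
  using n_pos by (rule le_top_eig)

lemma m_i\<^sub>0_le_\<nu>: "m i\<^sub>0 \<le> \<nu>"
  using n_pos m_le_l by (rule le_second_eig_top)

lemma l_le_\<nu>: "j < n \<Longrightarrow> j \<noteq> i\<^sub>0 \<Longrightarrow> l j \<le> \<nu>"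
  using n_pos m_le_l by (rule le_second_eig_other)

lemma \<nu>_le_\<Lambda>: "\<nu> \<le> \<Lambda>"
  using n_pos m_le_l by (rule second_eig_le_top)

lemma \<nu>_attained: "\<nu> = m i\<^sub>0 \<or> (\<exists>j<n. j \<noteq> i\<^sub>0 \<and> l j = \<nu>)"
  using n_pos m_le_l by (rule second_eig_attained)

definition exp_part :: "nat \<Rightarrow> nat \<Rightarrow> mat2" where
  "exp_part k j = exp (real k * l j) *\<^sub>R outer2 (u j) (u j) + exp (real k * m j) *\<^sub>R outer2 (v j) (v j)"

definition exp_sum :: "nat \<Rightarrow> mat2" where
  "exp_sum k = (\<Sum>j<n. exp_part k j)"

lemma sum_mat_exp_eq_exp_sum: "(\<Sum>j<n. mat_exp (real k *\<^sub>R Y j)) = exp_sum k"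
  unfolding exp_sum_def exp_part_def
  by (intro sum.cong refl) (simp add: mat_exp_scaleR_spectral_form spectral)

lemma spectral_form_exp_part:
  "j < n \<Longrightarrow> spectral_form (exp_part k j) (exp (real k * l j)) (exp (real k * m j)) (u j) (v j)"
  using spectral[of j] m_le_l[of j] by (simp add: spectral_form_def exp_part_def mult_left_mono)

lemma sym2_exp_sum: "sym2 (exp_sum k)"
  unfolding exp_sum_def exp_part_def by (intro sym2_sum sym2_add sym2_scaleR sym2_outer2)

lemma quad_exp_part: "quad (exp_part k j) x = exp (real k * l j) * (u j \<bullet> x)^2 + exp (real k * m j) * (v j \<bullet> x)^2"
  by (simp add: exp_part_def quad_add quad_scaleR quad_outer2)

lemma quad_exp_part_le_quad_exp_sum: "j < n \<Longrightarrow> quad (exp_part k j) x \<le> quad (exp_sum k) x"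
  unfolding exp_sum_def quad_sum by (rule member_le_sum) (simp_all add: quad_exp_part)

lemma exp_sum_top_eig_bounds:
  assumes sf: "spectral_form (exp_sum k) a b w w'"
  shows "exp (real k * \<Lambda>) \<le> a" "a \<le> 2 * real n * exp (real k * \<Lambda>)"
proof -
  have "exp (real k * \<Lambda>) = quad (exp_part k i\<^sub>0) (u i\<^sub>0)"
    using quad_spectral_form_eigvec(1)[OF spectral_form_exp_part[OF i\<^sub>0_less]] l_i\<^sub>0 by simp
  also have "\<dots> \<le> quad (exp_sum k) (u i\<^sub>0)" by (rule quad_exp_part_le_quad_exp_sum[OF i\<^sub>0_less])
  also have "\<dots> \<le> a" by (rule quad_spectral_form_bounds(2)[OF sf norm_eigvecs(1)[OF i\<^sub>0_less]])
  finally show "exp (real k * \<Lambda>) \<le> a" .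
  have "0 \<le> quad (exp_sum k) w'" unfolding exp_sum_def quad_sum by (intro sum_nonneg) (simp add: quad_exp_part)
  then have "0 \<le> b" using quad_spectral_form_eigvec(2)[OF sf] by simp
  moreover have "a + b = (\<Sum>j<n. exp (real k * l j) + exp (real k * m j))"
    unfolding trace_spectral_form[OF sf, symmetric] exp_sum_def trace_sum_mat2
    by (simp add: trace_spectral_form[OF spectral_form_exp_part])
  moreover have "\<dots> \<le> (\<Sum>j<n. 2 * exp (real k * \<Lambda>))"
  proof (rule sum_mono)
    fix j assume "j \<in> {..<n}"
    then have "real k * l j \<le> real k * \<Lambda>" "real k * m j \<le> real k * \<Lambda>"
      using l_le_\<Lambda> m_le_l by (auto intro!: mult_left_mono intro: order_trans)
    then have "exp (real k * l j) \<le> exp (real k * \<Lambda>)" "exp (real k * m j) \<le> exp (real k * \<Lambda>)"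
      by simp_all
    then show "exp (real k * l j) + exp (real k * m j) \<le> 2 * exp (real k * \<Lambda>)" by linarith
  qed
  ultimately show "a \<le> 2 * real n * exp (real k * \<Lambda>)" by simp
qed

text \<open>The lower bound on the smaller eigenvalue is where genericity enters: if \<open>\<nu> = l j\<close> with
  \<open>j \<noteq> i\<^sub>0\<close>, the quadratic form is at least \<open>exp (k \<nu>)\<close> times \<open>(u\<^sub>i\<^sub>0 \<bullet> x)\<^sup>2 + (u\<^sub>j \<bullet> x)\<^sup>2\<close>, which
  is bounded away from 0 on unit vectors since \<open>u\<^sub>i\<^sub>0, u\<^sub>j\<close> are not aligned.\<close>

lemma quad_exp_sum_lower_bound:
  obtains c where "0 < c" "\<And>k x. norm x = 1 \<Longrightarrow> c * exp (real k * \<nu>) \<le> quad (exp_sum k) x"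
proof (cases "\<nu> = m i\<^sub>0")
  case True
  show ?thesis
  proof (rule that[of 1])
    fix k and x :: "real^2"
    assume "norm x = 1"
    then have "exp (real k * \<nu>) \<le> quad (exp_part k i\<^sub>0) x"
      using quad_spectral_form_bounds(1)[OF spectral_form_exp_part[OF i\<^sub>0_less]] True by simp
    then show "1 * exp (real k * \<nu>) \<le> quad (exp_sum k) x"
      using quad_exp_part_le_quad_exp_sum[OF i\<^sub>0_less, of k x] by simp
  qed simp
next
  case False
  then obtain j where j: "j < n" "j \<noteq> i\<^sub>0" "l j = \<nu>" using \<nu>_attained by auto
  define c where "c = (cross2 (u i\<^sub>0) (u j))^2 / 2"
  show ?thesis
  proof (rule that[of c])
    show "0 < c"
      using not_aligned[OF i\<^sub>0_less j(1)] j(2) aligned_iff_cross2_eq_0 norm_eigvecs(1)[OF i\<^sub>0_less] norm_eigvecs(1)[OF j(1)]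
      unfolding c_def by auto
    fix k and x :: "real^2"
    assume x: "norm x = 1"
    have "exp (real k * \<nu>) * (u i\<^sub>0 \<bullet> x)^2 \<le> quad (exp_part k i\<^sub>0) x"
      using \<nu>_le_\<Lambda> l_i\<^sub>0 by (simp add: quad_exp_part add_increasing2 mult_right_mono mult_left_mono)
    moreover have "exp (real k * \<nu>) * (u j \<bullet> x)^2 \<le> quad (exp_part k j) x"
      using j(3) by (simp add: quad_exp_part)
    moreover have "quad (exp_part k i\<^sub>0) x + quad (exp_part k j) x \<le> quad (exp_sum k) x"
      unfolding exp_sum_def quad_sum
      using sum_mono2[of "{..<n}" "{i\<^sub>0, j}" "\<lambda>j. quad (exp_part k j) x"] i\<^sub>0_less j
      by (simp add: quad_exp_part)
    moreover have "c * exp (real k * \<nu>) \<le> exp (real k * \<nu>) * ((u i\<^sub>0 \<bullet> x)^2 + (u j \<bullet> x)^2)"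
      using cross2_sq_le_inner_sq_sum[OF norm_eigvecs(1)[OF i\<^sub>0_less] norm_eigvecs(1)[OF j(1)] x]
      unfolding c_def by (simp add: mult.commute)
    ultimately show "c * exp (real k * \<nu>) \<le> quad (exp_sum k) x"
      by (simp add: distrib_left)
  qed
qed

lemma exp_sum_low_eig_upper_bound:
  assumes sf: "spectral_form (exp_sum k) a b w w'"
  shows "b \<le> real n * exp (real k * \<nu>)"
proof -
  have "b \<le> quad (exp_sum k) (v i\<^sub>0)" by (rule quad_spectral_form_bounds(1)[OF sf norm_eigvecs(2)[OF i\<^sub>0_less]])
  also have "\<dots> = (\<Sum>j<n. quad (exp_part k j) (v i\<^sub>0))" unfolding exp_sum_def by (rule quad_sum)
  also have "\<dots> \<le> (\<Sum>j<n. exp (real k * \<nu>))"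
  proof (rule sum_mono)
    fix j assume "j \<in> {..<n}"
    then have j: "j < n" by simp
    show "quad (exp_part k j) (v i\<^sub>0) \<le> exp (real k * \<nu>)"
    proof (cases "j = i\<^sub>0")
      case True
      then show ?thesis
        using quad_spectral_form_eigvec(2)[OF spectral_form_exp_part[OF i\<^sub>0_less]] m_i\<^sub>0_le_\<nu>
        by (simp add: mult_left_mono)
    next
      case False
      have "real k * l j \<le> real k * \<nu>" using l_le_\<nu>[OF j False] by (simp add: mult_left_mono)
      then show ?thesis
        using quad_spectral_form_bounds(2)[OF spectral_form_exp_part[OF j] norm_eigvecs(2)[OF i\<^sub>0_less]]
        by (meson exp_le_cancel_iff order_trans)
    qed
  qed
  finally show ?thesis by simp
qed

lemma exp_shift: "exp (- (real k * \<Lambda>)) * exp (real k * a) = exp (real k * (a - \<Lambda>))"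
  by (simp add: algebra_simps flip: exp_add)

lemma scaled_exp_sum_tendsto:
  assumes gap: "\<nu> < \<Lambda>"
  shows "(\<lambda>k. exp (- (real k * \<Lambda>)) *\<^sub>R exp_sum k) \<longlonglongrightarrow> outer2 (u i\<^sub>0) (u i\<^sub>0)"
proof -
  have l_lim: "(\<lambda>k. exp (real k * (l j - \<Lambda>))) \<longlonglongrightarrow> (if j = i\<^sub>0 then 1 else 0)" if "j < n" for j
    using tendsto_exp_mult_neg[of "l j - \<Lambda>"] l_le_\<nu>[OF that] gap l_i\<^sub>0 by auto
  have m_lim: "(\<lambda>k. exp (real k * (m j - \<Lambda>))) \<longlonglongrightarrow> 0" if "j < n" for j
    using tendsto_exp_mult_neg[of "m j - \<Lambda>"] l_le_\<nu>[OF that] m_le_l[OF that] m_i\<^sub>0_le_\<nu> gap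
    by (cases "j = i\<^sub>0") auto
  have "(\<lambda>k. \<Sum>j<n. exp (real k * (l j - \<Lambda>)) *\<^sub>R outer2 (u j) (u j)
      + exp (real k * (m j - \<Lambda>)) *\<^sub>R outer2 (v j) (v j))
    \<longlonglongrightarrow> (\<Sum>j<n. (if j = i\<^sub>0 then 1 else 0) *\<^sub>R outer2 (u j) (u j) + 0 *\<^sub>R outer2 (v j) (v j))"
    by (intro tendsto_sum tendsto_add tendsto_scaleR l_lim m_lim tendsto_const) auto
  moreover have "(\<Sum>j<n. (if j = i\<^sub>0 then 1 else 0) *\<^sub>R outer2 (u j) (u j) + 0 *\<^sub>R outer2 (v j) (v j))
      = outer2 (u i\<^sub>0) (u i\<^sub>0)"
    using i\<^sub>0_less by (simp add: if_distrib[of "\<lambda>c. c *\<^sub>R _"] sum.delta cong: if_cong)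
  moreover have "exp (- (real k * \<Lambda>)) *\<^sub>R exp_sum k = (\<Sum>j<n. exp (real k * (l j - \<Lambda>)) *\<^sub>R outer2 (u j) (u j)
      + exp (real k * (m j - \<Lambda>)) *\<^sub>R outer2 (v j) (v j))" for k
    by (simp add: exp_sum_def exp_part_def scaleR_sum_right scaleR_add_right exp_shift)
  ultimately show ?thesis by simp
qed

lemma log_exp_limit: "log_exp_limit l m n Y = \<nu> *\<^sub>R mat 1 + (\<Lambda> - \<nu>) *\<^sub>R outer2 (u i\<^sub>0) (u i\<^sub>0)"
  using n_pos spectral by (rule log_exp_limit_eq)

theorem sup_LE_eq: "sup_LE n Y = log_exp_limit l m n Y"
proof -
  obtain a b w w' where sf: "\<And>k. spectral_form (exp_sum k) (a k) (b k) (w k) (w' k)"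
    using spectral_form_exists[OF sym2_exp_sum] by metis
  obtain c where c: "0 < c" "\<And>k x. norm x = 1 \<Longrightarrow> c * exp (real k * \<nu>) \<le> quad (exp_sum k) x"
    using quad_exp_sum_lower_bound by blast
  have b_lower: "c * exp (real k * \<nu>) \<le> b k" for k
    using c(2)[OF spectral_form_unit(2)[OF sf[of k]], of k] quad_spectral_form_eigvec(2)[OF sf[of k]]
    by simp
  have a_lim: "(\<lambda>k. ln (a k) / real k) \<longlonglongrightarrow> \<Lambda>"
    by (rule tendsto_ln_div_of_exp_bounds[of 1 "2 * real n"])
      (use n_pos exp_sum_top_eig_bounds[OF sf] in auto)
  have b_lim: "(\<lambda>k. ln (b k) / real k) \<longlonglongrightarrow> \<nu>"
    by (rule tendsto_ln_div_of_exp_bounds[of c "real n"])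
      (use n_pos c(1) b_lower exp_sum_low_eig_upper_bound[OF sf] in auto)
  have w_lim: "(\<lambda>k. outer2 (w k) (w k)) \<longlonglongrightarrow> outer2 (u i\<^sub>0) (u i\<^sub>0)" if "\<nu> \<noteq> \<Lambda>"
  proof (rule top_eigvec_tendsto[OF sf scaled_exp_sum_tendsto norm_eigvecs(1)[OF i\<^sub>0_less]])
    show gap: "\<nu> < \<Lambda>" using \<nu>_le_\<Lambda> that by simp
    show "(\<lambda>k. exp (- (real k * \<Lambda>)) * b k) \<longlonglongrightarrow> 0"
    proof (rule tendsto_sandwich[OF always_eventually always_eventually])
      show "\<forall>k. 0 \<le> exp (- (real k * \<Lambda>)) * b k"
        using b_lower c(1) by (metis exp_gt_zero less_eq_real_def mult_pos_pos order_less_le_trans)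
      show "\<forall>k. exp (- (real k * \<Lambda>)) * b k \<le> real n * exp (real k * (\<nu> - \<Lambda>))"
      proof
        fix k
        have "exp (- (real k * \<Lambda>)) * b k \<le> exp (- (real k * \<Lambda>)) * (real n * exp (real k * \<nu>))"
          using exp_sum_low_eig_upper_bound[OF sf] by (intro mult_left_mono) simp_all
        then show "exp (- (real k * \<Lambda>)) * b k \<le> real n * exp (real k * (\<nu> - \<Lambda>))"
          by (simp add: exp_shift mult.left_commute)
      qed
      show "(\<lambda>k. real n * exp (real k * (\<nu> - \<Lambda>))) \<longlonglongrightarrow> 0"
        using tendsto_mult_right_zero[OF tendsto_exp_mult_neg] gap by simp
    qed simp
  qed
  have "(\<lambda>k. (1 / real k) *\<^sub>R mat_log (\<Sum>j<n. mat_exp (real k *\<^sub>R Y j)))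
    \<longlonglongrightarrow> log_exp_limit l m n Y"
    unfolding sum_mat_exp_eq_exp_sum log_exp_limit
    by (rule tendsto_scaled_mat_log[OF sf a_lim b_lim w_lim])
  then show ?thesis unfolding sup_LE_def by (rule limI)
qed

end

lemma sup_LE_eq_log_exp_limit:
  assumes n: "0 < n" and gen: "generic_bases n Y"
    and eig: "\<And>j. j < n \<Longrightarrow> \<exists>u v. spectral_form (Y j) (l j) (m j) u v"
  shows "sup_LE n Y = log_exp_limit l m n Y"
proof -
  obtain l' m' u' v' where sf': "\<forall>j<n. spectral_form (Y j) (l' j) (m' j) (u' j) (v' j)"
    and "\<forall>i<n. \<forall>j<n. i \<noteq> j \<longrightarrow> \<not> aligned (u' i) (u' j)"
    using gen unfolding generic_bases_def by blast
  then have "generic_family n Y l' m' u' v'" using n by unfold_locales auto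
  then have "sup_LE n Y = log_exp_limit l' m' n Y" by (rule generic_family.sup_LE_eq)
  also have "\<dots> = log_exp_limit l m n Y"
    using n eig sf' spectral_form_eigenvalues_unique by (intro log_exp_limit_cong) metis+
  finally show ?thesis .
qed

section \<open>Planar perturbations and the relaxed supremum\<close>

lemma generic_planar_perturbation_exists:
  assumes sf: "\<And>j. j < n \<Longrightarrow> spectral_form (X j) (l j) (m j) (u j) (v j)"
  shows "\<exists>XD. converges_planar n XD X \<and> (\<forall>d>0. generic_bases n (XD d))"
proof -
  define good where "good t \<longleftrightarrow> (\<forall>i\<in>{..<n}. \<forall>j\<in>{..<n}.
    i \<noteq> j \<longrightarrow> cross2 (rot (real i * t) (u i)) (rot (real j * t) (u j)) \<noteq> 0)" for t
  have "\<forall>\<^sub>F t in at_right 0. good t"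
    unfolding good_def
  proof (intro eventually_ball_finite ballI finite_lessThan)
    fix i j assume "i \<in> {..<n}" "j \<in> {..<n}"
    then have "norm (u i) = 1" "norm (u j) = 1" using spectral_form_unit(1)[OF sf] by auto
    then show "\<forall>\<^sub>F t in at_right 0. i \<noteq> j \<longrightarrow> cross2 (rot (real i * t) (u i)) (rot (real j * t) (u j)) \<noteq> 0"
      using eventually_cross2_rot_ne_0[of "u i" "u j" "real i" "real j"]
      by (cases "i = j") (auto elim: eventually_mono)
  qed
  then obtain b where b: "0 < b" "\<And>t. 0 < t \<Longrightarrow> t < b \<Longrightarrow> good t"
    unfolding eventually_at_right_field by auto
  define \<tau> where "\<tau> d = min d (b / 2)" for d
  define XD where "XD d j = l j *\<^sub>R outer2 (rot (real j * \<tau> d) (u j)) (rot (real j * \<tau> d) (u j))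
    + m j *\<^sub>R outer2 (rot (real j * \<tau> d) (v j)) (rot (real j * \<tau> d) (v j))" for d j
  have sfD: "spectral_form (XD d j) (l j) (m j) (rot (real j * \<tau> d) (u j)) (rot (real j * \<tau> d) (v j))"
    if "j < n" for d j
    using sf[OF that] unfolding XD_def spectral_form_def by simp
  have "((\<lambda>d. XD d j) \<longlongrightarrow> X j) (at_right 0)" if "j < n" for j
  proof -
    have "((\<lambda>d. min d (b / 2)) \<longlongrightarrow> min 0 (b / 2)) (at_right 0)"
      by (intro tendsto_min tendsto_ident_at tendsto_const)
    moreover have "min 0 (b / 2) = (0::real)" using b(1) by simp
    ultimately have "(\<tau> \<longlongrightarrow> 0) (at_right 0)" unfolding \<tau>_def by (simp only:)
    then have angle: "((\<lambda>d. real j * \<tau> d) \<longlongrightarrow> 0) (at_right 0)"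
      by (rule tendsto_mult_right_zero)
    have Xj: "X j = l j *\<^sub>R outer2 (u j) (u j) + m j *\<^sub>R outer2 (v j) (v j)"
      using sf[OF that] by (simp add: spectral_form_def)
    show ?thesis
      unfolding XD_def Xj by (intro tendsto_add tendsto_scaleR tendsto_const tendsto_outer2 tendsto_rot angle)
  qed
  moreover have "same_eigenvalues (XD d j) (X j)" if "j < n" for d j
    by (rule same_eigenvalues_if_spectral_forms[OF sfD[OF that] sf[OF that]])
  moreover have "generic_bases n (XD d)" if "0 < d" for d
  proof -
    have "good (\<tau> d)" using b that by (intro b(2)) (auto simp: \<tau>_def)
    then have not_aligned: "\<not> aligned (rot (real i * \<tau> d) (u i)) (rot (real j * \<tau> d) (u j))"
      if "i < n" "j < n" "i \<noteq> j" for i j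
      using that spectral_form_unit(1)[OF sf] unfolding good_def by (simp add: aligned_iff_cross2_eq_0)
    show ?thesis
      unfolding generic_bases_def
      by (intro exI[of _ l] exI[of _ m] exI[of _ "\<lambda>j. rot (real j * \<tau> d) (u j)"]
          exI[of _ "\<lambda>j. rot (real j * \<tau> d) (v j)"]) (use sfD not_aligned in auto)
  qed
  ultimately show ?thesis unfolding converges_planar_def by blast
qed

lemma tendsto_sup_LE_planar:
  assumes n: "0 < n" and sf: "\<And>j. j < n \<Longrightarrow> spectral_form (X j) (l j) (m j) (u j) (v j)"
    and planar: "converges_planar n XD X" and gen: "\<forall>d>0. generic_bases n (XD d)"
  shows "((\<lambda>d. sup_LE n (XD d)) \<longlongrightarrow> log_exp_limit l m n X) (at_right 0)"
proof -
  have eq: "sup_LE n (XD d) = log_exp_limit l m n (XD d)" if "0 < d" for d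
  proof (rule sup_LE_eq_log_exp_limit[OF n gen[rule_format, OF that]])
    fix j assume j: "j < n"
    then have "same_eigenvalues (XD d j) (X j)" using planar that unfolding converges_planar_def by blast
    then show "\<exists>u v. spectral_form (XD d j) (l j) (m j) u v"
      using sf[OF j] unfolding same_eigenvalues_def by blast
  qed
  have lim: "((\<lambda>d. log_exp_limit l m n (XD d)) \<longlongrightarrow> log_exp_limit l m n X) (at_right 0)"
    using planar top_index_less[OF n] unfolding log_exp_limit_def Let_def converges_planar_def
    by (auto intro!: tendsto_intros)
  have ev: "\<forall>\<^sub>F d in at_right 0. log_exp_limit l m n (XD d) = sup_LE n (XD d)"
    using eventually_at_right_less[of "0::real"] by eventually_elim (use eq in simp)
  show ?thesis by (rule Lim_transform_eventually[OF lim ev])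
qed

lemma sup_RLE_eq:
  assumes n: "0 < n" and sf: "\<And>j. j < n \<Longrightarrow> spectral_form (X j) (l j) (m j) (u j) (v j)"
  shows "sup_RLE n X = log_exp_limit l m n X"
proof (cases "generic_bases n X")
  case True
  have "sup_LE n X = log_exp_limit l m n X"
    using sf by (intro sup_LE_eq_log_exp_limit[OF n True]) blast
  then show ?thesis unfolding sup_RLE_def using True by simp
next
  case False
  let ?limit = "\<lambda>L. \<forall>XD. converges_planar n XD X \<and> (\<forall>d>0. generic_bases n (XD d)) \<longrightarrow>
    ((\<lambda>d. sup_LE n (XD d)) \<longlongrightarrow> L) (at_right 0)"
  have "\<exists>XD. converges_planar n XD X \<and> (\<forall>d>0. generic_bases n (XD d))"
    using sf by (rule generic_planar_perturbation_exists)
  then obtain XD where XD: "converges_planar n XD X" "\<forall>d>0. generic_bases n (XD d)" by blast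
  have limit: "((\<lambda>d. sup_LE n (XD d)) \<longlongrightarrow> log_exp_limit l m n X) (at_right 0)"
    if "converges_planar n XD X" "\<forall>d>0. generic_bases n (XD d)" for XD
    using n sf that by (rule tendsto_sup_LE_planar)
  then have "?limit (log_exp_limit l m n X)" by blast
  moreover have "L = log_exp_limit l m n X" if "?limit L" for L
    using tendsto_unique[OF trivial_limit_at_right_real] that XD limit[OF XD] by blast
  ultimately have "(THE L. ?limit L) = log_exp_limit l m n X" by (rule the_equality)
  then show ?thesis unfolding sup_RLE_def using False by simp
qed

lemma sup_RLE_0: "sup_RLE 0 X = 0"
proof -
  have "mat_log 0 = 0"
    using mat_fun_spectral_form[OF spectral_form_scaleR_mat1[of 0]] by (simp add: mat_log_def)
  then show ?thesis by (simp add: sup_RLE_def generic_bases_def sup_LE_def limI)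
qed

theorem corollary3:
  fixes n :: nat and X :: "nat \<Rightarrow> real^2^2"
  assumes "\<forall>i<n. sym2 (X i)"
    and "\<forall>i<n. loewner_le ((- (1 / sqrt 2)) *\<^sub>R mat 1) (X i)
                \<and> loewner_le (X i) ((1 / sqrt 2) *\<^sub>R mat 1)"
  shows "loewner_le ((- (1 / sqrt 2)) *\<^sub>R mat 1) (sup_RLE n X)
       \<and> loewner_le (sup_RLE n X) ((1 / sqrt 2) *\<^sub>R mat 1)"
proof (cases "n = 0")
  case True
  then show ?thesis
    using spectral_form_loewner_bounds_iff[OF spectral_form_scaleR_mat1[of 0]] by (simp add: sup_RLE_0)
next
  case False
  then have n: "0 < n" by simp
  obtain l m u v where sf: "\<And>j. j < n \<Longrightarrow> spectral_form (X j) (l j) (m j) (u j) (v j)"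
    using assms(1) spectral_forms_exist by metis
  have "- (1 / sqrt 2) \<le> m j \<and> l j \<le> 1 / sqrt 2" if "j < n" for j
    using assms(2) spectral_form_loewner_bounds_iff[OF sf] that by blast
  with n sf have "loewner_le ((- (1 / sqrt 2)) *\<^sub>R mat 1) (log_exp_limit l m n X)
      \<and> loewner_le (log_exp_limit l m n X) ((1 / sqrt 2) *\<^sub>R mat 1)"
    by (rule log_exp_limit_loewner_bounds)
  moreover have "sup_RLE n X = log_exp_limit l m n X"
    using n sf by (rule sup_RLE_eq)
  ultimately show ?thesis by simp
qed

end
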